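(* Let $H$ be a graph and $H'$ any graph in the splitting family $\mathcal{H}(H)$. Then $\nu(H')\ge \nu(H)$.
   Context: $\nu(G)$ is the matching number of $G$. A vertex split on a vertex $v$ of $H$ replaces $v$ by an independent set of $d(v)$ new vertices, each adjacent to exactly one vertex of $N_H(v)$, distinct new vertices being adjacent to distinct neighbours. A vertex split on a set $U\subseteq V(H)$ means applying vertex splits to the vertices of $U$ one by one. The splitting family $\mathcal{H}(H)$ is the family of all graphs obtained from $H$ by applying a vertex split on some $U\subseteq V(H)$. *)

theory Defs
  imports Main
begin

definition graph :: "'a set \<Rightarrow> 'a set set \<Rightarrow> bool" where
  "graph V E \<longleftrightarrow> finite V \<and> (\<forall>e\<in>E. e \<subseteq> V \<and> card e = 2)"

definition matching :: "'a set set \<Rightarrow> 'a set set \<Rightarrow> bool" where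
  "matching E M \<longleftrightarrow> M \<subseteq> E \<and> (\<forall>e1\<in>M. \<forall>e2\<in>M. e1 \<noteq> e2 \<longrightarrow> e1 \<inter> e2 = {})"

definition matching_number :: "'a set set \<Rightarrow> nat" where
  "matching_number E = Max (card ` {M. matching E M})"

text \<open>A vertex x in U is replaced by new vertices Inr (x, e),
  one for each edge e incident to x (i.e. one per neighbour); the vertex Inr (x, e)
  is adjacent only to the endpoint (or its copy) of e other than x.\<close>
definition split_rep :: "'a set \<Rightarrow> 'a set \<Rightarrow> 'a \<Rightarrow> 'a + ('a \<times> 'a set)" where
  "split_rep U e x = (if x \<in> U then Inr (x, e) else Inl x)"

definition split_verts :: "'a set \<Rightarrow> 'a set set \<Rightarrow> 'a set \<Rightarrow> ('a + ('a \<times> 'a set)) set" where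
  "split_verts V E U = Inl ` (V - U) \<union> {Inr (x, e) | x e. x \<in> U \<and> e \<in> E \<and> x \<in> e}"

definition split_edges :: "'a set set \<Rightarrow> 'a set \<Rightarrow> ('a + ('a \<times> 'a set)) set set" where
  "split_edges E U = (\<lambda>e. split_rep U e ` e) ` E"

end

theory Submission
  imports Defs
begin

text \<open>Every edge e of H has a copy in the split graph, obtained by replacing each split
  endpoint x of e by its new vertex Inr (x, e). Forgetting the split (sending Inr (x, e)
  back to x) recovers e from its copy, so disjoint edges have disjoint copies and distinct
  edges have distinct copies. Hence the copy of a maximum matching of H is a matching
  of the split graph of the same size.\<close>

lemma finite_graph_edges:
  assumes "graph V E"
  shows "finite E"
proof -
  have "E \<subseteq> Pow V" using assms by (auto simp: graph_def)
  then show ?thesis using assms by (auto simp: graph_def intro: finite_subset)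
qed

lemma finite_matchings:
  assumes "finite E"
  shows "finite {M. matching E M}"
  using assms by (auto simp: matching_def intro: finite_subset[of _ "Pow E"])

lemma card_le_matching_number:
  assumes "finite E" and "matching E M"
  shows "card M \<le> matching_number E"
  unfolding matching_number_def using assms finite_matchings by (intro Max_ge) auto

lemma maximum_matching_exists:
  assumes "finite E"
  obtains M where "matching E M" and "card M = matching_number E"
proof -
  have "matching E {}" by (simp add: matching_def)
  then have "matching_number E \<in> card ` {M. matching E M}"
    unfolding matching_number_def using assms finite_matchings by (intro Max_in) auto
  then show ?thesis using that by auto
qed

lemma matching_image:
  assumes "matching E M" and "f ` E \<subseteq> E'" and "\<And>e. e \<in> E \<Longrightarrow> g ` f e = e"
  shows "matching E' (f ` M)"
  unfolding matching_def
proof (intro conjI ballI impI)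
  show "f ` M \<subseteq> E'" using assms(1,2) by (auto simp: matching_def)
next
  fix a b assume "a \<in> f ` M" "b \<in> f ` M" "a \<noteq> b"
  then obtain e1 e2 where e: "e1 \<in> M" "e2 \<in> M" "e1 \<noteq> e2" "a = f e1" "b = f e2" by auto
  with assms(1) have "e1 \<inter> e2 = {}" and "e1 \<in> E" "e2 \<in> E" by (auto simp: matching_def)
  then have "g ` (a \<inter> b) = {}" using assms(3) e(4,5) by blast
  then show "a \<inter> b = {}" by simp
qed

lemma matching_number_le_of_retraction:
  assumes "finite E" and "finite E'"
    and "f ` E \<subseteq> E'" and "\<And>e. e \<in> E \<Longrightarrow> g ` f e = e"
  shows "matching_number E \<le> matching_number E'"
proof -
  obtain M where M: "matching E M" "card M = matching_number E"
    using assms(1) by (rule maximum_matching_exists)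
  have "M \<subseteq> E" using M(1) by (simp add: matching_def)
  then have "inj_on f M" using assms(4) by (metis inj_on_def subsetD)
  then have "card (f ` M) = matching_number E" using M(2) by (simp add: card_image)
  moreover have "card (f ` M) \<le> matching_number E'"
    using assms(2) matching_image[OF M(1) assms(3,4)] by (rule card_le_matching_number)
  ultimately show ?thesis by simp
qed

definition unsplit :: "'a + ('a \<times> 'a set) \<Rightarrow> 'a" where
  "unsplit z = (case z of Inl x \<Rightarrow> x | Inr (x, _) \<Rightarrow> x)"

lemma unsplit_split_rep [simp]: "unsplit (split_rep U e x) = x"
  by (simp add: unsplit_def split_rep_def)

lemma unsplit_split_edge: "unsplit ` split_rep U e ` e = e"
  by (simp add: image_image)

theorem lemma2p3:
  fixes V U :: "'a set" and E :: "'a set set"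
  assumes "graph V E" and "U \<subseteq> V"
  shows "matching_number (split_edges E U) \<ge> matching_number E"
proof -
  have "finite E" using assms(1) by (rule finite_graph_edges)
  moreover have "finite (split_edges E U)" using \<open>finite E\<close> by (simp add: split_edges_def)
  ultimately show ?thesis
    unfolding split_edges_def
    by (rule matching_number_le_of_retraction[where f = "\<lambda>e. split_rep U e ` e" and g = unsplit])
       (simp_all add: unsplit_split_edge)
qed

end
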